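(* Let $0<r_j\le\infty$ and $0<s_j\le\infty$ for $j=1,\dots,n$, and let $\gamma(\mathbf{r})=\otimes_{j=1}^n\gamma(r_j)$ and $\gamma(\mathbf{s})=\otimes_{j=1}^n\gamma(s_j)$ be thermal states with $\operatorname{supp}\gamma(\mathbf{r})\subseteq\operatorname{supp}\gamma(\mathbf{s})$. Let $\mathcal{F}_{\mathbf{r}}=\{j\in\{1,\dots,n\}: r_j<\infty\}$, $\mathcal{F}_{\mathbf{s}}=\{j: s_j<\infty\}$, and $\mathcal{F}_{\mathbf{r}<\mathbf{s}}=\{j\in\mathcal{F}_{\mathbf{r}}\cap\mathcal{F}_{\mathbf{s}}: r_j<s_j\}$. Then: (1) If $\mathcal{F}_{\mathbf{r}<\mathbf{s}}=\emptyset$ (i.e. $r_j\ge s_j$ for all $j\in\mathcal{F}_{\mathbf{r}}\cap\mathcal{F}_{\mathbf{s}}$), then $D_\alpha(\gamma(\mathbf{r})\|\gamma(\mathbf{s}))<\infty$ for every $\alpha\in(0,1)\cup(1,\infty)$. (2) If $\mathcal{F}_{\mathbf{r}<\mathbf{s}}\neq\emptyset$, then for $\alpha\in(0,1)\cup(1,\infty)$, $$D_\alpha(\gamma(\mathbf{r})\|\gamma(\mathbf{s}))<\infty\iff \alpha<\min_{j\in\mathcal{F}_{\mathbf{r}<\mathbf{s}}}\frac{s_j}{s_j-r_j}.$$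
   Context: One-mode Fock space: $\ell^2(\mathbb{Z}_{\ge 0})$ with orthonormal particle basis $\{|k\rangle\}_{k\ge0}$; the $n$-mode space is the $n$-fold tensor product with basis $|\mathbf{k}\rangle=|k_1\rangle\otimes\cdots\otimes|k_n\rangle$. For $0<s<\infty$ the one-mode thermal state is $\gamma(s)=(1-e^{-s})\sum_{k\ge0}e^{-ks}|k\rangle\langle k|$, and $\gamma(\infty)=|0\rangle\langle0|$. $\operatorname{supp}$ denotes the support (orthogonal complement of the kernel). For states $\rho=\sum_i p_i|x_i\rangle\langle x_i|$, $\sigma=\sum_j q_j|y_j\rangle\langle y_j|$ (spectral decompositions with orthonormal bases), the Petz–Rényi $\alpha$-relative entropy for $\alpha\in(0,1)\cup(1,\infty)$ is $D_\alpha(\rho\|\sigma)=\frac{1}{\alpha-1}\log\sum_{i,j}p_i^\alpha q_j^{1-\alpha}|\langle x_i|y_j\rangle|^2$, with the conventions (for $\alpha>1$) $0^{1-\alpha}=\infty$ and $0\cdot\infty=0$. *)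

theory Defs
  imports "HOL-Analysis.Analysis" "HOL-Library.Extended_Real"
begin

text \<open>Petz--Renyi alpha-relative entropy of two states given by spectral decompositions
  rho = sum_i p i |x_i><x_i| (i in I) and sigma = sum_j q j |y_j><y_j| (j in J), where
  ov i j = |<x_i|y_j>|^2.  Values in the extended reals; natural logarithm.
  Conventions: 0^(1-alpha) = infinity for alpha > 1, and 0 * infinity = 0 (ennreal).\<close>

definition pow_conv :: "real \<Rightarrow> real \<Rightarrow> ennreal" where
  "pow_conv x a = (if x = 0 then (if a < 0 then \<infinity> else if a = 0 then 1 else 0)
                   else ennreal (x powr a))"

definition renyi_sum :: "real \<Rightarrow> 'i set \<Rightarrow> ('i \<Rightarrow> real) \<Rightarrow> 'j set \<Rightarrow> ('j \<Rightarrow> real)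
    \<Rightarrow> ('i \<Rightarrow> 'j \<Rightarrow> real) \<Rightarrow> ennreal" where
  "renyi_sum \<alpha> I p J q ov =
     (\<Sum>\<^sub>\<infinity>(i, j)\<in>I \<times> J. pow_conv (p i) \<alpha> * pow_conv (q j) (1 - \<alpha>) * ennreal (ov i j))"

definition log_ext :: "ennreal \<Rightarrow> ereal" where
  "log_ext S = (if S = 0 then -\<infinity> else if S = \<infinity> then \<infinity> else ereal (ln (enn2real S)))"

definition petz_renyi :: "real \<Rightarrow> 'i set \<Rightarrow> ('i \<Rightarrow> real) \<Rightarrow> 'j set \<Rightarrow> ('j \<Rightarrow> real)
    \<Rightarrow> ('i \<Rightarrow> 'j \<Rightarrow> real) \<Rightarrow> ereal" where
  "petz_renyi \<alpha> I p J q ov = ereal (1 / (\<alpha> - 1)) * log_ext (renyi_sum \<alpha> I p J q ov)"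

text \<open>n-mode Fock basis: multi-indices k with k j = 0 for j >= n (modes indexed 0..n-1).\<close>
definition fock_idx :: "nat \<Rightarrow> (nat \<Rightarrow> nat) set" where
  "fock_idx n = {k. \<forall>j\<ge>n. k j = 0}"

text \<open>|<k|k'>|^2 for orthonormal Fock basis vectors.\<close>
definition fock_overlap :: "(nat \<Rightarrow> nat) \<Rightarrow> (nat \<Rightarrow> nat) \<Rightarrow> real" where
  "fock_overlap k k' = (if k = k' then 1 else 0)"

text \<open>Eigenvalue of the one-mode thermal state gamma(s) on |k>; s = infinity gives |0><0|.\<close>
definition thermal1 :: "ereal \<Rightarrow> nat \<Rightarrow> real" where
  "thermal1 s k = (if s = \<infinity> then (if k = 0 then 1 else 0)
                   else (1 - exp (- real_of_ereal s)) * exp (- real k * real_of_ereal s))"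

text \<open>Eigenvalue of gamma(r_1) (x) ... (x) gamma(r_n) on |k_1 ... k_n>.\<close>
definition thermal :: "nat \<Rightarrow> (nat \<Rightarrow> ereal) \<Rightarrow> (nat \<Rightarrow> nat) \<Rightarrow> real" where
  "thermal n r k = (\<Prod>j<n. thermal1 (r j) (k j))"

definition D_thermal :: "real \<Rightarrow> nat \<Rightarrow> (nat \<Rightarrow> ereal) \<Rightarrow> (nat \<Rightarrow> ereal) \<Rightarrow> ereal" where
  "D_thermal \<alpha> n r s = petz_renyi \<alpha> (fock_idx n) (thermal n r) (fock_idx n) (thermal n s) fock_overlap"

text \<open>supp of a diagonal operator = closed span of basis vectors with nonzero eigenvalue.\<close>
definition thermal_supp_le :: "nat \<Rightarrow> (nat \<Rightarrow> ereal) \<Rightarrow> (nat \<Rightarrow> ereal) \<Rightarrow> bool" where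
  "thermal_supp_le n r s = (\<forall>k\<in>fock_idx n. thermal n r k \<noteq> 0 \<longrightarrow> thermal n s k \<noteq> 0)"

end

theory Submission
  imports Defs
begin

text \<open>Both states are diagonal in the Fock basis and are products over the modes, so the Renyi
  sum factorises into one-mode sums.  For a finite pair of inverse temperatures \<open>a, b\<close> the
  one-mode sum is geometric with ratio \<open>exp (-(\<alpha> a + (1 - \<alpha>) b))\<close>; it converges iff
  \<open>\<alpha> a + (1 - \<alpha>) b > 0\<close>, which fails only for \<open>a < b\<close> and \<open>\<alpha> \<ge> b / (b - a)\<close>.  A mode with
  \<open>r = \<infinity>\<close> contributes a single term.  For \<open>\<alpha> < 1\<close> the prefactor \<open>1 / (\<alpha> - 1)\<close> is negative,
  so a divergent sum still gives a finite (indeed \<open>-\<infinity>\<close>) divergence.\<close>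

lemma ennreal_prod_neq_top_iff:
  fixes f :: "'a \<Rightarrow> ennreal"
  assumes "finite I" and "\<And>i. i \<in> I \<Longrightarrow> 0 < f i"
  shows "(\<Prod>i\<in>I. f i) \<noteq> \<infinity> \<longleftrightarrow> (\<forall>i\<in>I. f i < \<infinity>)"
proof -
  have "\<forall>i\<in>I. f i \<noteq> 0" using assms(2) by force
  with \<open>finite I\<close> show ?thesis by (auto simp: ennreal_prod_eq_top top.not_eq_extremum)
qed

lemma infsum_Times_ennreal:
  fixes u :: "'a \<Rightarrow> ennreal" and v :: "'b \<Rightarrow> ennreal"
  shows "infsum (\<lambda>(x, y). u x * v y) (A \<times> B) = infsum u A * infsum v B"
proof (rule antisym)
  have sum_le_infsum: "sum f F \<le> infsum f C" if "finite F" "F \<subseteq> C" for f :: "'c \<Rightarrow> ennreal" and F C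
    unfolding nonneg_infsum_complete[OF zero_le] using that by (intro SUP_upper) auto
  show "infsum (\<lambda>(x, y). u x * v y) (A \<times> B) \<le> infsum u A * infsum v B"
    unfolding nonneg_infsum_complete[OF zero_le, of _ "A \<times> B"]
  proof (rule SUP_least)
    fix F assume F: "F \<in> {F. finite F \<and> F \<subseteq> A \<times> B}"
    then have fin: "finite (fst ` F)" "finite (snd ` F)" by auto
    have "sum (\<lambda>(x, y). u x * v y) F \<le> sum (\<lambda>(x, y). u x * v y) (fst ` F \<times> snd ` F)"
      by (rule sum_mono2) (use fin in \<open>auto simp: rev_image_eqI\<close>)
    also have "\<dots> = sum u (fst ` F) * sum v (snd ` F)"
      by (simp add: sum_product sum.cartesian_product)
    also have "\<dots> \<le> infsum u A * infsum v B"
      using F fin by (intro mult_mono sum_le_infsum) auto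
    finally show "sum (\<lambda>(x, y). u x * v y) F \<le> infsum u A * infsum v B" .
  qed
  show "infsum u A * infsum v B \<le> infsum (\<lambda>(x, y). u x * v y) (A \<times> B)"
    unfolding nonneg_infsum_complete[OF zero_le, of u] nonneg_infsum_complete[OF zero_le, of v]
      SUP_mult_left_ennreal SUP_mult_right_ennreal
  proof (intro SUP_least)
    fix F G assume F: "F \<in> {F. finite F \<and> F \<subseteq> A}" and G: "G \<in> {G. finite G \<and> G \<subseteq> B}"
    have "sum u F * sum v G = sum (\<lambda>(x, y). u x * v y) (F \<times> G)"
      by (simp add: sum_product sum.cartesian_product)
    also have "\<dots> \<le> infsum (\<lambda>(x, y). u x * v y) (A \<times> B)"
      using F G by (intro sum_le_infsum) auto
    finally show "sum u F * sum v G \<le> infsum (\<lambda>(x, y). u x * v y) (A \<times> B)" .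
  qed
qed

lemma infsum_nat_ennreal_eq_suminf: "infsum (f :: nat \<Rightarrow> ennreal) UNIV = suminf f"
proof -
  have "(f has_sum infsum f UNIV) UNIV" by (intro has_sum_infsum nonneg_summable_on_complete) simp
  then show ?thesis by (intro sums_unique has_sum_imp_sums)
qed

lemma suminf_ennreal_geometric_less_top_iff:
  fixes C x :: real
  assumes "0 < C" "0 \<le> x"
  shows "(\<Sum>m. ennreal (C * x ^ m)) < \<infinity> \<longleftrightarrow> x < 1"
proof
  assume "(\<Sum>m. ennreal (C * x ^ m)) < \<infinity>"
  then have "summable (\<lambda>m. C * x ^ m)"
    using assms by (intro summable_suminf_not_top) auto
  then show "x < 1" using assms by simp
next
  assume "x < 1"
  then have "summable (\<lambda>m. C * x ^ m)" using assms by simp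
  then show "(\<Sum>m. ennreal (C * x ^ m)) < \<infinity>"
    using assms ennreal_suminf_neq_top top.not_eq_extremum by fastforce
qed

lemma infsum_fock_idx_prod:
  fixes f :: "nat \<Rightarrow> nat \<Rightarrow> ennreal"
  shows "infsum (\<lambda>k. \<Prod>j<n. f j (k j)) (fock_idx n) = (\<Prod>j<n. infsum (f j) UNIV)"
proof (induction n)
  case 0
  have "fock_idx 0 = {\<lambda>_. 0}" by (auto simp: fock_idx_def)
  then show ?case by simp
next
  case (Suc n)
  have bij: "bij_betw (\<lambda>(k, m). k(n := m)) (fock_idx n \<times> UNIV) (fock_idx (Suc n))"
    by (rule bij_betw_byWitness[where f' = "\<lambda>k. (k(n := 0), k n)"]) (auto simp: fock_idx_def)
  have "infsum (\<lambda>k. \<Prod>j<Suc n. f j (k j)) (fock_idx (Suc n))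
      = infsum (\<lambda>(k, m). \<Prod>j<Suc n. f j ((k(n := m)) j)) (fock_idx n \<times> UNIV)"
    by (simp add: infsum_reindex_bij_betw[OF bij, symmetric] case_prod_unfold)
  also have "\<dots> = infsum (\<lambda>(k, m). (\<Prod>j<n. f j (k j)) * f n m) (fock_idx n \<times> UNIV)"
    by (rule infsum_cong) (auto simp: lessThan_Suc mult.commute intro!: prod.cong)
  also have "\<dots> = (\<Prod>j<Suc n. infsum (f j) UNIV)"
    by (simp add: infsum_Times_ennreal Suc.IH)
  finally show ?case .
qed

lemma renyi_sum_fock_overlap:
  "renyi_sum \<alpha> I p I q fock_overlap = infsum (\<lambda>k. pow_conv (p k) \<alpha> * pow_conv (q k) (1 - \<alpha>)) I"
proof -
  have "renyi_sum \<alpha> I p I q fock_overlap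
      = infsum (\<lambda>(i, j). pow_conv (p i) \<alpha> * pow_conv (q j) (1 - \<alpha>) * ennreal (fock_overlap i j))
          ((\<lambda>k. (k, k)) ` I)"
    unfolding renyi_sum_def by (rule infsum_cong_neutral) (auto simp: fock_overlap_def)
  also have "\<dots> = infsum (\<lambda>k. pow_conv (p k) \<alpha> * pow_conv (q k) (1 - \<alpha>)) I"
    by (subst infsum_reindex) (auto simp: inj_on_def fock_overlap_def o_def)
  finally show ?thesis .
qed

lemma petz_renyi_less_top_iff:
  assumes "renyi_sum \<alpha> I p J q ov \<noteq> 0" "\<alpha> \<noteq> 1"
  shows "petz_renyi \<alpha> I p J q ov < \<infinity> \<longleftrightarrow> \<alpha> < 1 \<or> renyi_sum \<alpha> I p J q ov \<noteq> \<infinity>"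
  using assms by (cases "\<alpha> < 1") (auto simp: petz_renyi_def log_ext_def divide_less_0_iff)

lemma pow_conv_pos: "0 < x \<Longrightarrow> pow_conv x a = ennreal (x powr a)"
  by (simp add: pow_conv_def)

lemma pow_conv_mult: "0 \<le> x \<Longrightarrow> 0 \<le> y \<Longrightarrow> pow_conv (x * y) a = pow_conv x a * pow_conv y a"
  unfolding pow_conv_def
  by (auto simp: powr_mult ennreal_mult ennreal_mult_eq_top_iff ennreal_top_mult ennreal_mult_top)

lemma pow_conv_prod:
  "finite A \<Longrightarrow> (\<And>i. i \<in> A \<Longrightarrow> 0 \<le> x i) \<Longrightarrow> pow_conv (\<Prod>i\<in>A. x i) a = (\<Prod>i\<in>A. pow_conv (x i) a)"
proof (induction A rule: finite_induct)
  case empty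
  then show ?case by (simp add: pow_conv_def)
next
  case (insert i A)
  then show ?case by (simp add: pow_conv_mult prod_nonneg)
qed

lemma thermal1_nonneg: "0 < r \<Longrightarrow> 0 \<le> thermal1 r m"
  by (cases r) (auto simp: thermal1_def)

lemma thermal1_0_pos: "0 < r \<Longrightarrow> 0 < thermal1 r 0"
  by (cases r) (auto simp: thermal1_def)

lemma thermal1_pos: "0 < r \<Longrightarrow> r \<noteq> \<infinity> \<Longrightarrow> 0 < thermal1 r m"
  by (cases r) (auto simp: thermal1_def)

lemma thermal_supp_le_finite:
  assumes supp: "thermal_supp_le n r s" and r_pos: "\<forall>j<n. 0 < r j"
    and j: "j < n" and rj: "r j \<noteq> \<infinity>"
  shows "s j \<noteq> \<infinity>"
proof -
  define k where "k = (\<lambda>i. if i = j then 1 else 0 :: nat)"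
  have "k \<in> fock_idx n" using j by (auto simp: k_def fock_idx_def)
  moreover have "thermal n r k \<noteq> 0"
    unfolding thermal_def using r_pos rj thermal1_0_pos thermal1_pos
    by (auto simp: k_def) (metis less_irrefl)+
  ultimately have "thermal n s k \<noteq> 0" using supp by (auto simp: thermal_supp_le_def)
  then have "thermal1 (s j) (k j) \<noteq> 0" using j by (auto simp: thermal_def)
  then have "thermal1 (s j) 1 \<noteq> 0" by (simp add: k_def)
  then show ?thesis by (auto simp: thermal1_def)
qed

definition thermal_mode_sum :: "real \<Rightarrow> ereal \<Rightarrow> ereal \<Rightarrow> ennreal" where
  "thermal_mode_sum \<alpha> r s = (\<Sum>\<^sub>\<infinity>m\<in>UNIV. pow_conv (thermal1 r m) \<alpha> * pow_conv (thermal1 s m) (1 - \<alpha>))"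

lemma renyi_sum_thermal:
  assumes "\<forall>j<n. 0 < r j" "\<forall>j<n. 0 < s j"
  shows "renyi_sum \<alpha> (fock_idx n) (thermal n r) (fock_idx n) (thermal n s) fock_overlap
    = (\<Prod>j<n. thermal_mode_sum \<alpha> (r j) (s j))"
proof -
  have "pow_conv (thermal n r k) \<alpha> * pow_conv (thermal n s k) (1 - \<alpha>)
      = (\<Prod>j<n. pow_conv (thermal1 (r j) (k j)) \<alpha> * pow_conv (thermal1 (s j) (k j)) (1 - \<alpha>))" for k
    unfolding thermal_def prod.distrib using assms
    by (subst (1 2) pow_conv_prod) (auto intro: thermal1_nonneg)
  then show ?thesis
    using infsum_fock_idx_prod[of "\<lambda>j m. pow_conv (thermal1 (r j) m) \<alpha> * pow_conv (thermal1 (s j) m) (1 - \<alpha>)"]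
    by (simp add: renyi_sum_fock_overlap thermal_mode_sum_def)
qed

lemma thermal_mode_sum_pos:
  assumes "0 < r" "0 < s"
  shows "0 < thermal_mode_sum \<alpha> r s"
proof -
  have "0 < pow_conv (thermal1 r 0) \<alpha> * pow_conv (thermal1 s 0) (1 - \<alpha>)"
    using thermal1_0_pos[OF assms(1)] thermal1_0_pos[OF assms(2)] by (simp add: pow_conv_pos flip: ennreal_mult)
  also have "\<dots> \<le> thermal_mode_sum \<alpha> r s"
    unfolding thermal_mode_sum_def nonneg_infsum_complete[OF zero_le] by (rule SUP_upper2[of "{0}"]) auto
  finally show ?thesis .
qed

lemma thermal_mode_sum_infinity:
  assumes "0 < s" "0 < \<alpha>"
  shows "thermal_mode_sum \<alpha> \<infinity> s < \<infinity>"
proof -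
  \<comment> \<open>only the vacuum term survives, as \<open>pow_conv 0 \<alpha> = 0\<close> for \<open>\<alpha> > 0\<close>\<close>
  have "thermal_mode_sum \<alpha> \<infinity> s = pow_conv (thermal1 s 0) (1 - \<alpha>)"
    unfolding thermal_mode_sum_def using assms
    by (subst infsum_cong_neutral[where T = "{0}"]) (auto simp: thermal1_def pow_conv_def)
  then show ?thesis
    using assms thermal1_0_pos by (simp add: pow_conv_pos)
qed

lemma thermal_mode_sum_ereal:
  assumes "0 < a" "0 < b"
  shows "thermal_mode_sum \<alpha> (ereal a) (ereal b)
    = (\<Sum>m. ennreal ((1 - exp (-a)) powr \<alpha> * (1 - exp (-b)) powr (1 - \<alpha>)
                       * exp (-(\<alpha> * a + (1 - \<alpha>) * b)) ^ m))"
proof -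
  have pos: "0 < 1 - exp (-a)" "0 < 1 - exp (-b)" using assms by auto
  have "pow_conv (thermal1 (ereal a) m) \<alpha> * pow_conv (thermal1 (ereal b) m) (1 - \<alpha>)
      = ennreal ((1 - exp (-a)) powr \<alpha> * (1 - exp (-b)) powr (1 - \<alpha>)
                 * exp (-(\<alpha> * a + (1 - \<alpha>) * b)) ^ m)" for m
  proof -
    have "exp (-(\<alpha> * a + (1 - \<alpha>) * b)) ^ m = exp (- real m * a * \<alpha>) * exp (- real m * b * (1 - \<alpha>))"
      by (simp add: algebra_simps flip: exp_of_nat_mult exp_add)
    then have "((1 - exp (-a)) * exp (- real m * a)) powr \<alpha> * ((1 - exp (-b)) * exp (- real m * b)) powr (1 - \<alpha>)
      = (1 - exp (-a)) powr \<alpha> * (1 - exp (-b)) powr (1 - \<alpha>) * exp (-(\<alpha> * a + (1 - \<alpha>) * b)) ^ m"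
      using pos by (simp add: powr_mult exp_powr_real)
    then show ?thesis
      using pos by (simp add: thermal1_def pow_conv_pos flip: ennreal_mult)
  qed
  then show ?thesis
    by (simp add: thermal_mode_sum_def infsum_nat_ennreal_eq_suminf)
qed

lemma convex_comb_pos_iff:
  fixes \<alpha> a b :: real
  assumes "0 < a" "0 < b" "0 < \<alpha>"
  shows "0 < \<alpha> * a + (1 - \<alpha>) * b \<longleftrightarrow> (a < b \<longrightarrow> \<alpha> < b / (b - a))"
proof (cases "a < b")
  case True
  then show ?thesis by (simp add: pos_less_divide_eq algebra_simps)
next
  case False
  have "\<alpha> * a + (1 - \<alpha>) * b = b + \<alpha> * (a - b)" by (simp add: algebra_simps)
  moreover have "0 \<le> \<alpha> * (a - b)" using assms False by simp
  ultimately have "0 < \<alpha> * a + (1 - \<alpha>) * b" using assms by linarith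
  with False show ?thesis by simp
qed

lemma thermal_mode_sum_less_top_iff:
  assumes r: "0 < r" and s: "0 < s" and \<alpha>: "0 < \<alpha>" and supp: "r \<noteq> \<infinity> \<Longrightarrow> s \<noteq> \<infinity>"
  shows "thermal_mode_sum \<alpha> r s < \<infinity> \<longleftrightarrow>
    (r < \<infinity> \<and> s < \<infinity> \<and> r < s \<longrightarrow> \<alpha> < real_of_ereal s / (real_of_ereal s - real_of_ereal r))"
proof (cases "r = \<infinity>")
  case True
  then show ?thesis using thermal_mode_sum_infinity[OF s \<alpha>] by simp
next
  case False
  then obtain a b where ab: "r = ereal a" "s = ereal b" and a: "0 < a" and b: "0 < b"
    using r s supp by (cases r; cases s) auto
  have "thermal_mode_sum \<alpha> r s < \<infinity> \<longleftrightarrow> exp (-(\<alpha> * a + (1 - \<alpha>) * b)) < 1"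
    unfolding ab thermal_mode_sum_ereal[OF a b] using a b
    by (intro suminf_ennreal_geometric_less_top_iff) auto
  also have "\<dots> \<longleftrightarrow> 0 < \<alpha> * a + (1 - \<alpha>) * b" by (simp; linarith)
  finally show ?thesis using convex_comb_pos_iff[OF a b \<alpha>] ab by simp
qed

lemma D_thermal_less_top_iff:
  assumes r_pos: "\<forall>j<n. 0 < r j" and s_pos: "\<forall>j<n. 0 < s j"
    and supp: "thermal_supp_le n r s" and \<alpha>: "0 < \<alpha>" "\<alpha> \<noteq> 1"
  shows "D_thermal \<alpha> n r s < \<infinity> \<longleftrightarrow>
    (\<forall>j<n. r j < \<infinity> \<and> s j < \<infinity> \<and> r j < s j \<longrightarrow>
       \<alpha> < real_of_ereal (s j) / (real_of_ereal (s j) - real_of_ereal (r j)))"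
    (is "_ \<longleftrightarrow> (\<forall>j<n. ?Frs j \<longrightarrow> \<alpha> < ?g j)")
proof -
  define T where "T j = thermal_mode_sum \<alpha> (r j) (s j)" for j
  have T_pos: "0 < T j" if "j < n" for j
    unfolding T_def using that r_pos s_pos by (intro thermal_mode_sum_pos) auto
  have T_fin: "T j < \<infinity> \<longleftrightarrow> (?Frs j \<longrightarrow> \<alpha> < ?g j)" if "j < n" for j
    unfolding T_def using that r_pos s_pos \<alpha> thermal_supp_le_finite[OF supp r_pos]
    by (subst thermal_mode_sum_less_top_iff) auto
  have g_gt_1: "1 < ?g j" if "j < n" "?Frs j" for j
    using that r_pos by (cases "r j"; cases "s j") auto
  have "(\<Prod>j<n. T j) \<noteq> 0" using T_pos by (force simp: prod_zero_iff)
  then have "D_thermal \<alpha> n r s < \<infinity> \<longleftrightarrow> \<alpha> < 1 \<or> (\<Prod>j<n. T j) \<noteq> \<infinity>"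
    using petz_renyi_less_top_iff[of \<alpha> "fock_idx n" "thermal n r" "fock_idx n" "thermal n s" fock_overlap] \<alpha>
    unfolding D_thermal_def renyi_sum_thermal[OF r_pos s_pos] T_def by blast
  also have "\<dots> \<longleftrightarrow> (\<forall>j<n. ?Frs j \<longrightarrow> \<alpha> < ?g j)"
  proof (cases "\<alpha> < 1")
    case True
    then show ?thesis using g_gt_1 by (auto dest: less_trans)
  next
    case False
    have "(\<Prod>j<n. T j) \<noteq> \<infinity> \<longleftrightarrow> (\<forall>j<n. T j < \<infinity>)"
      using ennreal_prod_neq_top_iff[of "{..<n}" T] T_pos by auto
    then show ?thesis using False T_fin by auto
  qed
  finally show ?thesis .
qed

theorem theorem3p1:
  fixes n :: nat and r s :: "nat \<Rightarrow> ereal" and \<alpha> :: real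
  assumes r_pos: "\<forall>j<n. 0 < r j" and s_pos: "\<forall>j<n. 0 < s j"
    and supp: "thermal_supp_le n r s"
    and \<alpha>: "0 < \<alpha>" "\<alpha> \<noteq> 1"
  defines "Frs \<equiv> {j. j < n \<and> r j < \<infinity> \<and> s j < \<infinity> \<and> r j < s j}"
  shows "(Frs = {} \<longrightarrow> D_thermal \<alpha> n r s < \<infinity>)
       \<and> (Frs \<noteq> {} \<longrightarrow>
           (D_thermal \<alpha> n r s < \<infinity> \<longleftrightarrow>
            \<alpha> < Min ((\<lambda>j. real_of_ereal (s j) / (real_of_ereal (s j) - real_of_ereal (r j))) ` Frs)))"
proof -
  have "finite Frs" by (simp add: Frs_def)
  then show ?thesis
    using D_thermal_less_top_iff[OF r_pos s_pos supp \<alpha>] by (auto simp: Frs_def Min_gr_iff)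
qed

end
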